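(* Let $n, K$ be positive integers and let $\{t_1,\dots,t_n\}$ be partitioned into $K$ nonempty true clusters $C_1,\dots,C_K$ with sizes $n_j=|C_j|$; set $n_{\min}=\min_j n_j$. Let $g^{\mathrm{True}}\in\{0,1\}^{n\times K}$ with $g^{\mathrm{True}}_{ij}=1$ iff $t_i\in C_j$, and let $g\in\{0,1\}^{n\times K}$ be any estimated assignment matrix in which each row has exactly one entry equal to $1$. Define $\bar p(C_j)=n_j/n$, $\hat p(C_j)=\frac1n\sum_{i=1}^n g_{ij}$, $$\bar{\mathcal E}=-\sum_{j=1}^K \bar p(C_j)\log \bar p(C_j),\qquad \hat{\mathcal E}=-\sum_{j=1}^K \hat p(C_j)\log \hat p(C_j)$$ (with $0\log 0=0$), and $M_{\mathrm{error}}=\sum_{j=1}^K\sum_{i=1}^n \mathbb I(g_{ij}\neq g^{\mathrm{True}}_{ij})$. Suppose there exists $0<c_2<1$ such that $2Kn_{\min}/n\ge c_2$. Then $$|\hat{\mathcal E}-\bar{\mathcal E}|\le h\!\left(\frac{2K}{c_2}\right)\left|\frac{1}{n}M_{\mathrm{error}}\right|,\qquad\text{where } h(x)=x+\log x.$$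
   Context: $\bar{\mathcal E}$ is the empirical (true-cluster) entropy and $\hat{\mathcal E}$ the entropy computed from the estimated clustering; estimated cluster $j$ is compared with true cluster $j$ (labels are aligned). $\log$ is the natural logarithm. *)

theory Defs
  imports Complex_Main
begin

definition xlogx :: "real \<Rightarrow> real" where
  "xlogx x = (if x = 0 then 0 else x * ln x)"

definition entropy :: "nat \<Rightarrow> (nat \<Rightarrow> real) \<Rightarrow> real" where
  "entropy K p = - (\<Sum>j\<in>{1..K}. xlogx (p j))"

definition hfun :: "real \<Rightarrow> real" where
  "hfun x = x + ln x"

definition gTrue :: "(nat \<Rightarrow> nat set) \<Rightarrow> nat \<Rightarrow> nat \<Rightarrow> real" where
  "gTrue C i j = (if i \<in> C j then 1 else 0)"

definition pbar :: "nat \<Rightarrow> (nat \<Rightarrow> nat set) \<Rightarrow> nat \<Rightarrow> real" where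
  "pbar n C j = real (card (C j)) / real n"

definition phat :: "nat \<Rightarrow> (nat \<Rightarrow> nat \<Rightarrow> real) \<Rightarrow> nat \<Rightarrow> real" where
  "phat n g j = (1 / real n) * (\<Sum>i\<in>{1..n}. g i j)"

definition M_error :: "nat \<Rightarrow> nat \<Rightarrow> (nat \<Rightarrow> nat set) \<Rightarrow> (nat \<Rightarrow> nat \<Rightarrow> real) \<Rightarrow> real" where
  "M_error n K C g = (\<Sum>j\<in>{1..K}. \<Sum>i\<in>{1..n}. (if g i j \<noteq> gTrue C i j then 1 else 0))"

end

theory Submission
  imports Defs
begin

text \<open>
  Every true cluster has frequency at least \<open>c\<^sub>2 / (2K)\<close>. On distributions whose entries are
  bounded below by \<open>1/x\<close> (with \<open>x \<ge> 1\<close>) the entropy is \<open>\<ell>\<^sub>1\<close>-Lipschitz with constant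
  \<open>1 + log x \<le> h(x)\<close>, because convexity of \<open>t log t\<close> gives
  \<open>|q log q - p log p| \<le> (1 - log p) |q - p|\<close> for \<open>0 < p \<le> 1\<close>, \<open>0 \<le> q \<le> 1\<close>.
  Finally, the \<open>\<ell>\<^sub>1\<close>-distance between estimated and true cluster frequencies is at most
  \<open>M\<^sub>e\<^sub>r\<^sub>r\<^sub>o\<^sub>r / n\<close>, since every mismatched entry moves one column sum by one.
\<close>

lemma xlogx_tangent_le:
  fixes p q :: real
  assumes "0 < p" "0 \<le> q"
  shows "xlogx p + (1 + ln p) * (q - p) \<le> xlogx q"
proof (cases "q = 0")
  case True
  then show ?thesis using assms by (simp add: xlogx_def algebra_simps)
next
  case False
  with assms have "0 < q" by simp
  have "ln (p / q) \<le> p / q - 1" using \<open>0 < p\<close> \<open>0 < q\<close> by (intro ln_le_minus_one) simp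
  then have "q * ln (p / q) \<le> p - q" using \<open>0 < q\<close> by (simp add: field_simps)
  then show ?thesis using \<open>0 < p\<close> \<open>0 < q\<close> by (simp add: xlogx_def ln_div algebra_simps)
qed

lemma xlogx_le_mult_ln:
  fixes p q :: real
  assumes "0 \<le> q" "q \<le> p"
  shows "xlogx q \<le> q * ln p"
proof (cases "q = 0")
  case False
  with assms have "ln q \<le> ln p" by simp
  with assms show ?thesis by (simp add: xlogx_def mult_left_mono)
qed (simp add: xlogx_def)

lemma xlogx_diff_le:
  fixes p q :: real
  assumes p: "0 < p" "p \<le> 1" and q: "0 \<le> q" "q \<le> 1"
  shows "\<bar>xlogx q - xlogx p\<bar> \<le> (1 - ln p) * \<bar>q - p\<bar>"
proof -
  have "ln p \<le> 0" using p by simp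
  have lower: "- ((1 - ln p) * \<bar>q - p\<bar>) \<le> xlogx q - xlogx p"
  proof -
    have "\<bar>(1 + ln p) * (q - p)\<bar> \<le> (1 - ln p) * \<bar>q - p\<bar>"
      using \<open>ln p \<le> 0\<close> by (auto simp: abs_mult intro: mult_right_mono)
    then show ?thesis using xlogx_tangent_le[OF p(1) q(1)] by linarith
  qed
  have upper: "xlogx q - xlogx p \<le> (1 - ln p) * \<bar>q - p\<bar>"
  proof (cases "p \<le> q")
    case True
    have "xlogx q + (1 + ln q) * (p - q) \<le> xlogx p"
      using True p by (intro xlogx_tangent_le) auto
    moreover have "(1 + ln q) * (q - p) \<le> q - p"
      using True p q by (simp add: mult_left_le_one_le mult_le_cancel_right2)
    moreover have "q - p \<le> (1 - ln p) * \<bar>q - p\<bar>"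
      using True \<open>ln p \<le> 0\<close> mult_nonneg_nonneg[of "- ln p" "q - p"] by (simp add: algebra_simps)
    ultimately show ?thesis by (simp add: algebra_simps)
  next
    case False
    have "xlogx q - xlogx p \<le> (p - q) * (- ln p)"
      using xlogx_le_mult_ln[of q p] False p q by (simp add: xlogx_def algebra_simps)
    also have "\<dots> \<le> (1 - ln p) * \<bar>q - p\<bar>"
      using False by (simp add: algebra_simps)
    finally show ?thesis .
  qed
  from lower upper show ?thesis by linarith
qed

lemma entropy_diff_le:
  fixes p q :: "nat \<Rightarrow> real" and x :: real
  assumes "1 \<le> x"
    and p_ge: "\<And>j. j \<in> {1..K} \<Longrightarrow> 1 / x \<le> p j"
    and p_le_1: "\<And>j. j \<in> {1..K} \<Longrightarrow> p j \<le> 1"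
    and q_nonneg: "\<And>j. j \<in> {1..K} \<Longrightarrow> 0 \<le> q j"
    and q_le_1: "\<And>j. j \<in> {1..K} \<Longrightarrow> q j \<le> 1"
  shows "\<bar>entropy K q - entropy K p\<bar> \<le> hfun x * (\<Sum>j\<in>{1..K}. \<bar>q j - p j\<bar>)"
proof -
  have term_le: "\<bar>xlogx (q j) - xlogx (p j)\<bar> \<le> hfun x * \<bar>q j - p j\<bar>" if j: "j \<in> {1..K}" for j
  proof -
    have "0 < 1 / x" using \<open>1 \<le> x\<close> by simp
    with p_ge[OF j] have "0 < p j" by linarith
    have "ln (1 / x) \<le> ln (p j)" using p_ge[OF j] \<open>1 \<le> x\<close> \<open>0 < p j\<close> by (subst ln_le_cancel_iff) auto
    then have "- ln (p j) \<le> ln x" using \<open>1 \<le> x\<close> by (simp add: ln_div)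
    then have "1 - ln (p j) \<le> hfun x" using \<open>1 \<le> x\<close> by (simp add: hfun_def)
    then have "(1 - ln (p j)) * \<bar>q j - p j\<bar> \<le> hfun x * \<bar>q j - p j\<bar>"
      by (rule mult_right_mono) simp
    with xlogx_diff_le[OF \<open>0 < p j\<close> p_le_1 q_nonneg q_le_1] j show ?thesis by force
  qed
  have "\<bar>entropy K q - entropy K p\<bar> = \<bar>\<Sum>j\<in>{1..K}. xlogx (q j) - xlogx (p j)\<bar>"
    unfolding entropy_def by (simp add: sum_subtractf abs_minus_commute)
  also have "\<dots> \<le> (\<Sum>j\<in>{1..K}. \<bar>xlogx (q j) - xlogx (p j)\<bar>)" by (rule sum_abs)
  also have "\<dots> \<le> (\<Sum>j\<in>{1..K}. hfun x * \<bar>q j - p j\<bar>)" by (rule sum_mono) (rule term_le)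
  finally show ?thesis by (simp add: sum_distrib_left)
qed

lemma pbar_eq_phat_gTrue:
  assumes "C j \<subseteq> {1..n}"
  shows "pbar n C j = phat n (gTrue C) j"
proof -
  have "(\<Sum>i\<in>{1..n}. gTrue C i j) = real (card ({1..n} \<inter> C j))"
    by (simp add: gTrue_def sum.If_cases)
  also have "{1..n} \<inter> C j = C j" using assms by blast
  finally show ?thesis by (simp add: pbar_def phat_def)
qed

lemma Min_card_div_le_pbar:
  assumes "j \<in> {1..K}"
  shows "real (Min ((\<lambda>j. card (C j)) ` {1..K})) / real n \<le> pbar n C j"
  using assms by (auto simp: pbar_def intro: divide_right_mono Min_le)

lemma phat_nonneg:
  assumes "\<And>i. i \<in> {1..n} \<Longrightarrow> g i j \<in> {0, 1}"
  shows "0 \<le> phat n g j"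
  unfolding phat_def using assms by (intro mult_nonneg_nonneg sum_nonneg) fastforce+

lemma phat_le_1:
  assumes "\<And>i. i \<in> {1..n} \<Longrightarrow> g i j \<in> {0, 1}"
  shows "phat n g j \<le> 1"
proof -
  have "(\<Sum>i\<in>{1..n}. g i j) \<le> (\<Sum>i\<in>{1..n}. 1)" using assms by (intro sum_mono) fastforce
  then show ?thesis by (auto simp: phat_def divide_le_eq_1)
qed

lemma abs_phat_diff_le:
  assumes "\<And>i. i \<in> {1..n} \<Longrightarrow> g i j \<in> {0, 1}" "\<And>i. i \<in> {1..n} \<Longrightarrow> h i j \<in> {0, 1}"
  shows "\<bar>phat n g j - phat n h j\<bar> \<le> (1 / real n) * (\<Sum>i\<in>{1..n}. if g i j \<noteq> h i j then 1 else 0)"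
proof -
  have "\<bar>phat n g j - phat n h j\<bar> = (1 / real n) * \<bar>\<Sum>i\<in>{1..n}. g i j - h i j\<bar>"
    by (simp add: phat_def sum_subtractf diff_divide_distrib[symmetric] abs_divide)
  also have "\<dots> \<le> (1 / real n) * (\<Sum>i\<in>{1..n}. \<bar>g i j - h i j\<bar>)"
    by (intro mult_left_mono sum_abs) simp
  also have "\<dots> \<le> (1 / real n) * (\<Sum>i\<in>{1..n}. if g i j \<noteq> h i j then 1 else 0)"
    using assms by (intro mult_left_mono sum_mono) force+
  finally show ?thesis .
qed

lemma sum_abs_phat_pbar_le_M_error:
  assumes clusters: "\<And>j. j \<in> {1..K} \<Longrightarrow> C j \<subseteq> {1..n}"
    and g_binary: "\<And>i j. i \<in> {1..n} \<Longrightarrow> j \<in> {1..K} \<Longrightarrow> g i j \<in> {0, 1}"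
  shows "(\<Sum>j\<in>{1..K}. \<bar>phat n g j - pbar n C j\<bar>) \<le> (1 / real n) * M_error n K C g"
proof -
  have "(\<Sum>j\<in>{1..K}. \<bar>phat n g j - pbar n C j\<bar>)
      \<le> (\<Sum>j\<in>{1..K}. (1 / real n) * (\<Sum>i\<in>{1..n}. if g i j \<noteq> gTrue C i j then 1 else 0))"
  proof (rule sum_mono)
    fix j assume j: "j \<in> {1..K}"
    have "\<bar>phat n g j - phat n (gTrue C) j\<bar>
        \<le> (1 / real n) * (\<Sum>i\<in>{1..n}. if g i j \<noteq> gTrue C i j then 1 else 0)"
      using g_binary j by (intro abs_phat_diff_le) (auto simp: gTrue_def)
    then show "\<bar>phat n g j - pbar n C j\<bar>
        \<le> (1 / real n) * (\<Sum>i\<in>{1..n}. if g i j \<noteq> gTrue C i j then 1 else 0)"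
      using pbar_eq_phat_gTrue[of C j n] clusters[OF j] by simp
  qed
  then show ?thesis by (simp add: M_error_def sum_distrib_left)
qed

theorem lemma1:
  fixes n K :: nat and C :: "nat \<Rightarrow> nat set" and g :: "nat \<Rightarrow> nat \<Rightarrow> real" and c2 :: real
  assumes "n > 0" and "K > 0"
    and partition_cover: "(\<Union>j\<in>{1..K}. C j) = {1..n}"
    and partition_disj: "\<And>j j'. j \<in> {1..K} \<Longrightarrow> j' \<in> {1..K} \<Longrightarrow> j \<noteq> j' \<Longrightarrow> C j \<inter> C j' = {}"
    and nonempty: "\<And>j. j \<in> {1..K} \<Longrightarrow> C j \<noteq> {}"
    and g_binary: "\<And>i j. i \<in> {1..n} \<Longrightarrow> j \<in> {1..K} \<Longrightarrow> g i j \<in> {0, 1}"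
    and g_rows: "\<And>i. i \<in> {1..n} \<Longrightarrow> card {j \<in> {1..K}. g i j = 1} = 1"
    and "0 < c2" and "c2 < 1"
    and "2 * real K * real (Min ((\<lambda>j. card (C j)) ` {1..K})) / real n \<ge> c2"
  shows "\<bar>entropy K (phat n g) - entropy K (pbar n C)\<bar>
           \<le> hfun (2 * real K / c2) * \<bar>(1 / real n) * M_error n K C g\<bar>"
proof -
  have clusters: "C j \<subseteq> {1..n}" if "j \<in> {1..K}" for j using partition_cover that by blast
  have pbar_ge: "1 / (2 * real K / c2) \<le> pbar n C j" if j: "j \<in> {1..K}" for j
  proof -
    have "c2 / (2 * real K) \<le> real (Min ((\<lambda>j. card (C j)) ` {1..K})) / real n"
      using assms(10) \<open>K > 0\<close> by (simp add: field_simps)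
    with Min_card_div_le_pbar[of j K C n] j show ?thesis by simp
  qed
  have pbar_le_1: "pbar n C j \<le> 1" if "j \<in> {1..K}" for j
    using card_mono[OF _ clusters[OF that]] \<open>n > 0\<close> by (simp add: pbar_def divide_le_eq_1)
  have "1 \<le> 2 * real K / c2" using \<open>K > 0\<close> \<open>0 < c2\<close> \<open>c2 < 1\<close> by (simp add: field_simps)
  then have "\<bar>entropy K (phat n g) - entropy K (pbar n C)\<bar>
      \<le> hfun (2 * real K / c2) * (\<Sum>j\<in>{1..K}. \<bar>phat n g j - pbar n C j\<bar>)"
    using pbar_ge pbar_le_1 g_binary by (intro entropy_diff_le phat_nonneg phat_le_1) auto
  also have "\<dots> \<le> hfun (2 * real K / c2) * ((1 / real n) * M_error n K C g)"
    using \<open>1 \<le> 2 * real K / c2\<close> clusters g_binary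
    by (intro mult_left_mono sum_abs_phat_pbar_le_M_error) (auto simp: hfun_def)
  also have "\<dots> = hfun (2 * real K / c2) * \<bar>(1 / real n) * M_error n K C g\<bar>"
    by (simp add: M_error_def sum_nonneg)
  finally show ?thesis .
qed

end
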